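(* Let $\mathcal K$ be a 2-category which admits Eilenberg–Moore constructions for monads and in which idempotent 2-cells split. Let $\varrho:(V,\psi)\Rightarrow(W,\phi)$ be a 2-cell in $\mathrm{EM}^w(\mathcal K)$ between 1-cells $(t,\mu,\eta)\to(t',\mu',\eta')$. For $X\in\{V,W\}$ with structure 2-cell $\chi\in\{\psi,\phi\}$, let $Xv\overset{\pi}{\Rightarrow}\widetilde X\overset{\iota}{\Rightarrow}Xv$ be the chosen splitting of the idempotent $Xv\epsilon\ast\chi v\ast\eta'Xv$, and let $\widetilde\psi:=\pi\ast Vv\epsilon\ast\psi v\ast t'\iota$, $\widetilde\phi:=\pi\ast Wv\epsilon\ast\phi v\ast t'\iota$. Then $\widetilde\varrho:=\pi\ast Wv\epsilon\ast\varrho v\ast\iota:\widetilde V\Rightarrow\widetilde W$ is a 2-cell $(\widetilde V,\widetilde\psi)\Rightarrow(\widetilde W,\widetilde\phi)$ in $\mathrm{EM}(\mathcal K)$, i.e. $\widetilde\varrho\ast\widetilde\psi=\widetilde\phi\ast t'\widetilde\varrho$.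
   Context: Conventions in a 2-category $\mathcal K$: horizontal composition and whiskering by juxtaposition in the order of functor composition; identity 1-cell of $k$ written $k$, identity 2-cell of $V$ written $V$; vertical composition $\ast$ with $\alpha\ast\beta$ meaning $\beta$ then $\alpha$. A monad $(t,\mu,\eta)$ on $k$: $t:k\to k$, $\mu:tt\Rightarrow t$, $\eta:k\Rightarrow t$, associative and unital. $\mathrm{EM}^w(\mathcal K)$: a 1-cell $(t,\mu,\eta)\to(t',\mu',\eta')$ ($t$ on $k$, $t'$ on $k'$) is $(V,\psi)$, $V:k\to k'$, $\psi:t'V\Rightarrow Vt$, with $V\mu\ast\psi t\ast t'\psi=\psi\ast\mu'V$; a 2-cell $(V,\psi)\Rightarrow(W,\phi)$ is $\varrho:V\Rightarrow Wt$ with $W\mu\ast\varrho t\ast\psi=W\mu\ast\phi t\ast t'\varrho$ and $\varrho=W\mu\ast\phi t\ast\eta'Wt\ast\varrho$. In the Lack–Street 2-category $\mathrm{EM}(\mathcal K)$, 1-cells from an identity monad $I(l)$ to $t'$ are pairs $(A,\alpha:t'A\Rightarrow A)$ ($t'$-algebras) and 2-cells $(A,\alpha)\Rightarrow(B,\beta)$ are $\rho:A\Rightarrow B$ with $\beta\ast t'\rho=\rho\ast\alpha$. $\mathcal K$ admits Eilenberg–Moore constructions for monads: the inclusion $I:\mathcal K\to\mathrm{EM}(\mathcal K)$ has a right 2-adjoint $J$; each monad $(t,\mu,\eta)$ on $k$ gives an adjunction $f\dashv v$, $f:k\to J(t)$, $v:J(t)\to k$, unit $\eta$, counit $\epsilon:fv\Rightarrow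 J(t)$, with $t=vf$, $\mu=v\epsilon f$; for $t'$: $f',v',\eta',\epsilon'$. Idempotent 2-cells split (every idempotent $e$ factors as $e=\iota\ast\pi$ with $\pi\ast\iota$ an identity). For a 1-cell $(X,\chi)$ of $\mathrm{EM}^w(\mathcal K)$, $Xv\epsilon\ast\chi v\ast\eta'Xv$ is idempotent, and $(\widetilde X,\widetilde\chi)$ is a $t'$-algebra on $\widetilde X:J(t)\to k'$. *)

theory Defs
  imports Main
begin

text \<open>Composition is written in the order of functor composition:
comp1 g f is "g after f" (juxtaposition g f); hcomp a b is the horizontal composite
(juxtaposition a b); vcomp a b is a * b, i.e. b first, then a.\<close>

record ('o, 'm, 'c) twocat =
  obj   :: "'o set"
  arr1  :: "'m set"
  src1  :: "'m \<Rightarrow> 'o"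
  tgt1  :: "'m \<Rightarrow> 'o"
  arr2  :: "'c set"
  dom2  :: "'c \<Rightarrow> 'm"
  cod2  :: "'c \<Rightarrow> 'm"
  id1   :: "'o \<Rightarrow> 'm"
  comp1 :: "'m \<Rightarrow> 'm \<Rightarrow> 'm"
  id2   :: "'m \<Rightarrow> 'c"
  vcomp :: "'c \<Rightarrow> 'c \<Rightarrow> 'c"
  hcomp :: "'c \<Rightarrow> 'c \<Rightarrow> 'c"

definition hom1 :: "('o,'m,'c) twocat \<Rightarrow> 'm \<Rightarrow> 'o \<Rightarrow> 'o \<Rightarrow> bool" where
  "hom1 K x a b \<longleftrightarrow> x \<in> arr1 K \<and> src1 K x = a \<and> tgt1 K x = b"

definition hom2 :: "('o,'m,'c) twocat \<Rightarrow> 'c \<Rightarrow> 'm \<Rightarrow> 'm \<Rightarrow> bool" where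
  "hom2 K \<alpha> x y \<longleftrightarrow> \<alpha> \<in> arr2 K \<and> dom2 K \<alpha> = x \<and> cod2 K \<alpha> = y"

definition two_category :: "('o,'m,'c) twocat \<Rightarrow> bool" where
  "two_category K \<longleftrightarrow>
    \<comment> \<open>1-cells\<close>
    (\<forall>x\<in>arr1 K. src1 K x \<in> obj K \<and> tgt1 K x \<in> obj K) \<and>
    (\<forall>a\<in>obj K. hom1 K (id1 K a) a a) \<and>
    (\<forall>f\<in>arr1 K. \<forall>g\<in>arr1 K. src1 K g = tgt1 K f \<longrightarrow>
        hom1 K (comp1 K g f) (src1 K f) (tgt1 K g)) \<and>
    (\<forall>f\<in>arr1 K. \<forall>g\<in>arr1 K. \<forall>h\<in>arr1 K. src1 K h = tgt1 K g \<longrightarrow> src1 K g = tgt1 K f \<longrightarrow>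
        comp1 K h (comp1 K g f) = comp1 K (comp1 K h g) f) \<and>
    (\<forall>f\<in>arr1 K. comp1 K (id1 K (tgt1 K f)) f = f \<and> comp1 K f (id1 K (src1 K f)) = f) \<and>
    \<comment> \<open>2-cells\<close>
    (\<forall>\<alpha>\<in>arr2 K. dom2 K \<alpha> \<in> arr1 K \<and> cod2 K \<alpha> \<in> arr1 K \<and>
        src1 K (dom2 K \<alpha>) = src1 K (cod2 K \<alpha>) \<and> tgt1 K (dom2 K \<alpha>) = tgt1 K (cod2 K \<alpha>)) \<and>
    (\<forall>x\<in>arr1 K. hom2 K (id2 K x) x x) \<and>
    \<comment> \<open>vertical composition\<close>
    (\<forall>\<alpha>\<in>arr2 K. \<forall>\<beta>\<in>arr2 K. dom2 K \<alpha> = cod2 K \<beta> \<longrightarrow>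
        hom2 K (vcomp K \<alpha> \<beta>) (dom2 K \<beta>) (cod2 K \<alpha>)) \<and>
    (\<forall>\<alpha>\<in>arr2 K. \<forall>\<beta>\<in>arr2 K. \<forall>\<gamma>\<in>arr2 K. dom2 K \<alpha> = cod2 K \<beta> \<longrightarrow> dom2 K \<beta> = cod2 K \<gamma> \<longrightarrow>
        vcomp K \<alpha> (vcomp K \<beta> \<gamma>) = vcomp K (vcomp K \<alpha> \<beta>) \<gamma>) \<and>
    (\<forall>\<alpha>\<in>arr2 K. vcomp K (id2 K (cod2 K \<alpha>)) \<alpha> = \<alpha> \<and> vcomp K \<alpha> (id2 K (dom2 K \<alpha>)) = \<alpha>) \<and>
    \<comment> \<open>horizontal composition\<close>
    (\<forall>\<alpha>\<in>arr2 K. \<forall>\<beta>\<in>arr2 K. src1 K (dom2 K \<alpha>) = tgt1 K (dom2 K \<beta>) \<longrightarrow>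
        hom2 K (hcomp K \<alpha> \<beta>) (comp1 K (dom2 K \<alpha>) (dom2 K \<beta>)) (comp1 K (cod2 K \<alpha>) (cod2 K \<beta>))) \<and>
    (\<forall>\<alpha>\<in>arr2 K. \<forall>\<beta>\<in>arr2 K. \<forall>\<gamma>\<in>arr2 K.
        src1 K (dom2 K \<alpha>) = tgt1 K (dom2 K \<beta>) \<longrightarrow> src1 K (dom2 K \<beta>) = tgt1 K (dom2 K \<gamma>) \<longrightarrow>
        hcomp K \<alpha> (hcomp K \<beta> \<gamma>) = hcomp K (hcomp K \<alpha> \<beta>) \<gamma>) \<and>
    (\<forall>\<alpha>\<in>arr2 K. hcomp K (id2 K (id1 K (tgt1 K (dom2 K \<alpha>)))) \<alpha> = \<alpha> \<and>
                 hcomp K \<alpha> (id2 K (id1 K (src1 K (dom2 K \<alpha>)))) = \<alpha>) \<and>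
    (\<forall>f\<in>arr1 K. \<forall>g\<in>arr1 K. src1 K g = tgt1 K f \<longrightarrow>
        hcomp K (id2 K g) (id2 K f) = id2 K (comp1 K g f)) \<and>
    \<comment> \<open>interchange law\<close>
    (\<forall>\<alpha>\<in>arr2 K. \<forall>\<beta>\<in>arr2 K. \<forall>\<gamma>\<in>arr2 K. \<forall>\<delta>\<in>arr2 K.
        dom2 K \<alpha> = cod2 K \<beta> \<longrightarrow> dom2 K \<gamma> = cod2 K \<delta> \<longrightarrow> src1 K (dom2 K \<alpha>) = tgt1 K (dom2 K \<gamma>) \<longrightarrow>
        vcomp K (hcomp K \<alpha> \<gamma>) (hcomp K \<beta> \<delta>) = hcomp K (vcomp K \<alpha> \<beta>) (vcomp K \<gamma> \<delta>))"

text \<open>Whiskering: wr K \<alpha> x is the 2-cell \<alpha>x, wl K x \<alpha> is x\<alpha>.\<close>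

definition wr :: "('o,'m,'c) twocat \<Rightarrow> 'c \<Rightarrow> 'm \<Rightarrow> 'c" where
  "wr K \<alpha> x = hcomp K \<alpha> (id2 K x)"

definition wl :: "('o,'m,'c) twocat \<Rightarrow> 'm \<Rightarrow> 'c \<Rightarrow> 'c" where
  "wl K x \<alpha> = hcomp K (id2 K x) \<alpha>"

definition idempotents_split :: "('o,'m,'c) twocat \<Rightarrow> bool" where
  "idempotents_split K \<longleftrightarrow>
    (\<forall>e\<in>arr2 K. dom2 K e = cod2 K e \<and> vcomp K e e = e \<longrightarrow>
      (\<exists>X \<pi> \<iota>. hom2 K \<pi> (dom2 K e) X \<and> hom2 K \<iota> X (dom2 K e) \<and>
               e = vcomp K \<iota> \<pi> \<and> vcomp K \<pi> \<iota> = id2 K X))"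

definition monad :: "('o,'m,'c) twocat \<Rightarrow> 'o \<Rightarrow> 'm \<Rightarrow> 'c \<Rightarrow> 'c \<Rightarrow> bool" where
  "monad K k t \<mu> \<eta> \<longleftrightarrow> k \<in> obj K \<and> hom1 K t k k \<and>
     hom2 K \<mu> (comp1 K t t) t \<and> hom2 K \<eta> (id1 K k) t \<and>
     vcomp K \<mu> (wr K \<mu> t) = vcomp K \<mu> (wl K t \<mu>) \<and>
     vcomp K \<mu> (wr K \<eta> t) = id2 K t \<and> vcomp K \<mu> (wl K t \<eta>) = id2 K t"

text \<open>A t-algebra (A, \<alpha>) with A : l \<rightarrow> k, i.e. a 1-cell I(l) \<rightarrow> t in EM(K).\<close>

definition algebra :: "('o,'m,'c) twocat \<Rightarrow> 'o \<Rightarrow> 'm \<Rightarrow> 'c \<Rightarrow> 'c \<Rightarrow> 'o \<Rightarrow> 'm \<Rightarrow> 'c \<Rightarrow> bool" where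
  "algebra K k t \<mu> \<eta> l A \<alpha> \<longleftrightarrow> l \<in> obj K \<and> hom1 K A l k \<and> hom2 K \<alpha> (comp1 K t A) A \<and>
     vcomp K \<alpha> (wr K \<eta> A) = id2 K A \<and>
     vcomp K \<alpha> (wr K \<mu> A) = vcomp K \<alpha> (wl K t \<alpha>)"

text \<open>A 2-cell (A, \<alpha>) \<Rightarrow> (B, \<beta>) in EM(K) between 1-cells I(l) \<rightarrow> t.\<close>

definition em_2cell :: "('o,'m,'c) twocat \<Rightarrow> 'm \<Rightarrow> 'm \<Rightarrow> 'c \<Rightarrow> 'm \<Rightarrow> 'c \<Rightarrow> 'c \<Rightarrow> bool" where
  "em_2cell K t A \<alpha> B \<beta> \<rho> \<longleftrightarrow> hom2 K \<rho> A B \<and> vcomp K \<beta> (wl K t \<rho>) = vcomp K \<rho> \<alpha>"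

text \<open>Eilenberg-Moore object of the monad t on k: object E with f : k \<rightarrow> E, v : E \<rightarrow> k,
adjunction f \<stileturn> v with unit \<eta> and counit \<epsilon>, t = v f, \<mu> = v\<epsilon>f, and (v, v\<epsilon>) is the
universal t-algebra (composition with it is an isomorphism of hom-categories
K(l, E) \<cong> EM(K)(I(l), t) for every object l), i.e. E = J(t) for the right 2-adjoint J.\<close>

definition em_object :: "('o,'m,'c) twocat \<Rightarrow> 'o \<Rightarrow> 'm \<Rightarrow> 'c \<Rightarrow> 'c \<Rightarrow> 'o \<Rightarrow> 'm \<Rightarrow> 'm \<Rightarrow> 'c \<Rightarrow> bool" where
  "em_object K k t \<mu> \<eta> E f v \<epsilon> \<longleftrightarrow>
     E \<in> obj K \<and> hom1 K f k E \<and> hom1 K v E k \<and> hom2 K \<epsilon> (comp1 K f v) (id1 K E) \<and>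
     comp1 K v f = t \<and> wr K (wl K v \<epsilon>) f = \<mu> \<and>
     vcomp K (wr K \<epsilon> f) (wl K f \<eta>) = id2 K f \<and>
     vcomp K (wl K v \<epsilon>) (wr K \<eta> v) = id2 K v \<and>
     (\<forall>l A \<alpha>. algebra K k t \<mu> \<eta> l A \<alpha> \<longrightarrow>
        (\<exists>!g. hom1 K g l E \<and> comp1 K v g = A \<and> wr K (wl K v \<epsilon>) g = \<alpha>)) \<and>
     (\<forall>l g h \<rho>. l \<in> obj K \<and> hom1 K g l E \<and> hom1 K h l E \<and>
        em_2cell K t (comp1 K v g) (wr K (wl K v \<epsilon>) g) (comp1 K v h) (wr K (wl K v \<epsilon>) h) \<rho> \<longrightarrow>
        (\<exists>!\<sigma>. hom2 K \<sigma> g h \<and> wl K v \<sigma> = \<rho>))"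

definition admits_EM :: "('o,'m,'c) twocat \<Rightarrow> bool" where
  "admits_EM K \<longleftrightarrow> (\<forall>k t \<mu> \<eta>. monad K k t \<mu> \<eta> \<longrightarrow> (\<exists>E f v \<epsilon>. em_object K k t \<mu> \<eta> E f v \<epsilon>))"

definition emw_1cell :: "('o,'m,'c) twocat \<Rightarrow> 'o \<Rightarrow> 'm \<Rightarrow> 'c \<Rightarrow> 'o \<Rightarrow> 'm \<Rightarrow> 'c \<Rightarrow> 'm \<Rightarrow> 'c \<Rightarrow> bool" where
  "emw_1cell K k t \<mu> k' t' \<mu>' V \<psi> \<longleftrightarrow> hom1 K V k k' \<and> hom2 K \<psi> (comp1 K t' V) (comp1 K V t) \<and>
     vcomp K (wl K V \<mu>) (vcomp K (wr K \<psi> t) (wl K t' \<psi>)) = vcomp K \<psi> (wr K \<mu>' V)"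

definition emw_2cell :: "('o,'m,'c) twocat \<Rightarrow> 'm \<Rightarrow> 'c \<Rightarrow> 'm \<Rightarrow> 'c \<Rightarrow> 'm \<Rightarrow> 'c \<Rightarrow> 'm \<Rightarrow> 'c \<Rightarrow> 'c \<Rightarrow> bool" where
  "emw_2cell K t \<mu> t' \<eta>' V \<psi> W \<phi> \<rho> \<longleftrightarrow> hom2 K \<rho> V (comp1 K W t) \<and>
     vcomp K (wl K W \<mu>) (vcomp K (wr K \<rho> t) \<psi>) =
       vcomp K (wl K W \<mu>) (vcomp K (wr K \<phi> t) (wl K t' \<rho>)) \<and>
     \<rho> = vcomp K (wl K W \<mu>) (vcomp K (wr K \<phi> t) (vcomp K (wr K \<eta>' (comp1 K W t)) \<rho>))"

definition tilde_idem :: "('o,'m,'c) twocat \<Rightarrow> 'c \<Rightarrow> 'm \<Rightarrow> 'c \<Rightarrow> 'm \<Rightarrow> 'c \<Rightarrow> 'c" where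
  "tilde_idem K \<eta>' v \<epsilon> X \<chi> =
     vcomp K (wl K (comp1 K X v) \<epsilon>) (vcomp K (wr K \<chi> v) (wr K \<eta>' (comp1 K X v)))"

end

theory Submission
  imports Defs
begin

text \<open>
  For \<open>\<gamma> : Y \<Rightarrow> X v f\<close> let \<open>\<gamma>\<^sup>\<flat> = X v \<epsilon> \<cdot> \<gamma> v : Y v \<Rightarrow> X v\<close> be its mate across \<open>f \<stileturn> v\<close>.
  The interchange law applied to \<open>\<epsilon>\<close> with itself shows that \<open>\<gamma>\<^sup>\<flat> \<cdot> \<delta>\<^sup>\<flat> = (X\<mu> \<cdot> \<gamma>t \<cdot> \<delta>)\<^sup>\<flat>\<close>.
  Hence \<open>\<psi>\<^sup>\<flat> : t'Vv \<Rightarrow> Vv\<close> is associative for \<open>\<mu>'\<close>, and the unit laws of \<open>t'\<close> then show that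
  \<open>\<psi>\<^sup>\<flat>\<close> absorbs the idempotent \<open>\<psi>\<^sup>\<flat> \<cdot> \<eta>'Vv = \<iota> \<cdot> \<pi>\<close> from either side.
  Cancelling the splittings this way gives
  \<open>\<rho>\<^sup>~ \<cdot> \<psi>\<^sup>~ = \<pi> \<cdot> (W\<mu> \<cdot> \<rho>t \<cdot> \<psi>)\<^sup>\<flat> \<cdot> t'\<iota>\<close> and \<open>\<phi>\<^sup>~ \<cdot> t'\<rho>\<^sup>~ = \<pi> \<cdot> (W\<mu> \<cdot> \<phi>t \<cdot> t'\<rho>)\<^sup>\<flat> \<cdot> t'\<iota>\<close>,
  which agree by the first axiom of the 2-cell \<open>\<rho>\<close> of \<open>EM\<^sup>w(K)\<close>.
\<close>

text \<open>The clauses of \<open>two_category\<close> as rewrite rules; the source and target of a 2-cell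
  are normalised to those of its codomain.\<close>

locale strict_2cat =
  fixes K :: "('o,'m,'c) twocat"
  assumes src1_obj [simp]: "x \<in> arr1 K \<Longrightarrow> src1 K x \<in> obj K"
    and tgt1_obj [simp]: "x \<in> arr1 K \<Longrightarrow> tgt1 K x \<in> obj K"
    and id1_in_arr1 [simp]: "a \<in> obj K \<Longrightarrow> id1 K a \<in> arr1 K"
    and src1_id1 [simp]: "a \<in> obj K \<Longrightarrow> src1 K (id1 K a) = a"
    and tgt1_id1 [simp]: "a \<in> obj K \<Longrightarrow> tgt1 K (id1 K a) = a"
    and comp1_in_arr1 [simp]:
      "\<lbrakk>f \<in> arr1 K; g \<in> arr1 K; src1 K g = tgt1 K f\<rbrakk> \<Longrightarrow> comp1 K g f \<in> arr1 K"
    and src1_comp1 [simp]: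
      "\<lbrakk>f \<in> arr1 K; g \<in> arr1 K; src1 K g = tgt1 K f\<rbrakk> \<Longrightarrow> src1 K (comp1 K g f) = src1 K f"
    and tgt1_comp1 [simp]:
      "\<lbrakk>f \<in> arr1 K; g \<in> arr1 K; src1 K g = tgt1 K f\<rbrakk> \<Longrightarrow> tgt1 K (comp1 K g f) = tgt1 K g"
    and comp1_assoc [simp]:
      "\<lbrakk>f \<in> arr1 K; g \<in> arr1 K; h \<in> arr1 K; src1 K h = tgt1 K g; src1 K g = tgt1 K f\<rbrakk>
       \<Longrightarrow> comp1 K (comp1 K h g) f = comp1 K h (comp1 K g f)"
    and comp1_id1_left [simp]: "\<lbrakk>f \<in> arr1 K; tgt1 K f = a\<rbrakk> \<Longrightarrow> comp1 K (id1 K a) f = f"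
    and comp1_id1_right [simp]: "\<lbrakk>f \<in> arr1 K; src1 K f = a\<rbrakk> \<Longrightarrow> comp1 K f (id1 K a) = f"
    and dom2_in_arr1 [simp]: "\<alpha> \<in> arr2 K \<Longrightarrow> dom2 K \<alpha> \<in> arr1 K"
    and cod2_in_arr1 [simp]: "\<alpha> \<in> arr2 K \<Longrightarrow> cod2 K \<alpha> \<in> arr1 K"
    and src1_dom2 [simp]: "\<alpha> \<in> arr2 K \<Longrightarrow> src1 K (dom2 K \<alpha>) = src1 K (cod2 K \<alpha>)"
    and tgt1_dom2 [simp]: "\<alpha> \<in> arr2 K \<Longrightarrow> tgt1 K (dom2 K \<alpha>) = tgt1 K (cod2 K \<alpha>)"
    and id2_in_arr2 [simp]: "x \<in> arr1 K \<Longrightarrow> id2 K x \<in> arr2 K"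
    and dom2_id2 [simp]: "x \<in> arr1 K \<Longrightarrow> dom2 K (id2 K x) = x"
    and cod2_id2 [simp]: "x \<in> arr1 K \<Longrightarrow> cod2 K (id2 K x) = x"
    and vcomp_in_arr2 [simp]:
      "\<lbrakk>\<alpha> \<in> arr2 K; \<beta> \<in> arr2 K; dom2 K \<alpha> = cod2 K \<beta>\<rbrakk> \<Longrightarrow> vcomp K \<alpha> \<beta> \<in> arr2 K"
    and dom2_vcomp [simp]:
      "\<lbrakk>\<alpha> \<in> arr2 K; \<beta> \<in> arr2 K; dom2 K \<alpha> = cod2 K \<beta>\<rbrakk> \<Longrightarrow> dom2 K (vcomp K \<alpha> \<beta>) = dom2 K \<beta>"
    and cod2_vcomp [simp]:
      "\<lbrakk>\<alpha> \<in> arr2 K; \<beta> \<in> arr2 K; dom2 K \<alpha> = cod2 K \<beta>\<rbrakk> \<Longrightarrow> cod2 K (vcomp K \<alpha> \<beta>) = cod2 K \<alpha>"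
    and vcomp_assoc [simp]:
      "\<lbrakk>\<alpha> \<in> arr2 K; \<beta> \<in> arr2 K; \<gamma> \<in> arr2 K; dom2 K \<alpha> = cod2 K \<beta>; dom2 K \<beta> = cod2 K \<gamma>\<rbrakk>
       \<Longrightarrow> vcomp K (vcomp K \<alpha> \<beta>) \<gamma> = vcomp K \<alpha> (vcomp K \<beta> \<gamma>)"
    and vcomp_id2_left [simp]: "\<lbrakk>\<alpha> \<in> arr2 K; cod2 K \<alpha> = x\<rbrakk> \<Longrightarrow> vcomp K (id2 K x) \<alpha> = \<alpha>"
    and vcomp_id2_right [simp]: "\<lbrakk>\<alpha> \<in> arr2 K; dom2 K \<alpha> = x\<rbrakk> \<Longrightarrow> vcomp K \<alpha> (id2 K x) = \<alpha>"
    and hcomp_in_arr2: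
      "\<lbrakk>\<alpha> \<in> arr2 K; \<beta> \<in> arr2 K; src1 K (dom2 K \<alpha>) = tgt1 K (dom2 K \<beta>)\<rbrakk> \<Longrightarrow> hcomp K \<alpha> \<beta> \<in> arr2 K"
    and dom2_hcomp:
      "\<lbrakk>\<alpha> \<in> arr2 K; \<beta> \<in> arr2 K; src1 K (dom2 K \<alpha>) = tgt1 K (dom2 K \<beta>)\<rbrakk>
       \<Longrightarrow> dom2 K (hcomp K \<alpha> \<beta>) = comp1 K (dom2 K \<alpha>) (dom2 K \<beta>)"
    and cod2_hcomp:
      "\<lbrakk>\<alpha> \<in> arr2 K; \<beta> \<in> arr2 K; src1 K (dom2 K \<alpha>) = tgt1 K (dom2 K \<beta>)\<rbrakk>
       \<Longrightarrow> cod2 K (hcomp K \<alpha> \<beta>) = comp1 K (cod2 K \<alpha>) (cod2 K \<beta>)"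
    and hcomp_assoc:
      "\<lbrakk>\<alpha> \<in> arr2 K; \<beta> \<in> arr2 K; \<gamma> \<in> arr2 K;
        src1 K (dom2 K \<alpha>) = tgt1 K (dom2 K \<beta>); src1 K (dom2 K \<beta>) = tgt1 K (dom2 K \<gamma>)\<rbrakk>
       \<Longrightarrow> hcomp K (hcomp K \<alpha> \<beta>) \<gamma> = hcomp K \<alpha> (hcomp K \<beta> \<gamma>)"
    and hcomp_id_left: "\<lbrakk>\<alpha> \<in> arr2 K; tgt1 K (dom2 K \<alpha>) = a\<rbrakk> \<Longrightarrow> hcomp K (id2 K (id1 K a)) \<alpha> = \<alpha>"
    and hcomp_id_right: "\<lbrakk>\<alpha> \<in> arr2 K; src1 K (dom2 K \<alpha>) = a\<rbrakk> \<Longrightarrow> hcomp K \<alpha> (id2 K (id1 K a)) = \<alpha>"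
    and hcomp_id2_id2:
      "\<lbrakk>f \<in> arr1 K; g \<in> arr1 K; src1 K g = tgt1 K f\<rbrakk> \<Longrightarrow> hcomp K (id2 K g) (id2 K f) = id2 K (comp1 K g f)"
    and interchange:
      "\<lbrakk>\<alpha> \<in> arr2 K; \<beta> \<in> arr2 K; \<gamma> \<in> arr2 K; \<delta> \<in> arr2 K;
        dom2 K \<alpha> = cod2 K \<beta>; dom2 K \<gamma> = cod2 K \<delta>; src1 K (dom2 K \<alpha>) = tgt1 K (dom2 K \<gamma>)\<rbrakk>
       \<Longrightarrow> vcomp K (hcomp K \<alpha> \<gamma>) (hcomp K \<beta> \<delta>) = hcomp K (vcomp K \<alpha> \<beta>) (vcomp K \<gamma> \<delta>)"

lemma two_category_imp_strict_2cat: "two_category K \<Longrightarrow> strict_2cat K"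
  unfolding two_category_def hom1_def hom2_def
  by (unfold_locales; elim conjE; hypsubst?; simp)

context strict_2cat
begin

abbreviation vc :: "'c \<Rightarrow> 'c \<Rightarrow> 'c" (infixr "\<cdot>" 70)
  where "\<alpha> \<cdot> \<beta> \<equiv> vcomp K \<alpha> \<beta>"

lemma wl_in_arr2 [simp]:
    "\<lbrakk>x \<in> arr1 K; \<alpha> \<in> arr2 K; src1 K x = tgt1 K (dom2 K \<alpha>)\<rbrakk> \<Longrightarrow> wl K x \<alpha> \<in> arr2 K"
  and dom2_wl [simp]:
    "\<lbrakk>x \<in> arr1 K; \<alpha> \<in> arr2 K; src1 K x = tgt1 K (dom2 K \<alpha>)\<rbrakk> \<Longrightarrow> dom2 K (wl K x \<alpha>) = comp1 K x (dom2 K \<alpha>)"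
  and cod2_wl [simp]:
    "\<lbrakk>x \<in> arr1 K; \<alpha> \<in> arr2 K; src1 K x = tgt1 K (dom2 K \<alpha>)\<rbrakk> \<Longrightarrow> cod2 K (wl K x \<alpha>) = comp1 K x (cod2 K \<alpha>)"
  by (simp_all add: wl_def hcomp_in_arr2 dom2_hcomp cod2_hcomp)

lemma wr_in_arr2 [simp]:
    "\<lbrakk>x \<in> arr1 K; \<alpha> \<in> arr2 K; src1 K (dom2 K \<alpha>) = tgt1 K x\<rbrakk> \<Longrightarrow> wr K \<alpha> x \<in> arr2 K"
  and dom2_wr [simp]:
    "\<lbrakk>x \<in> arr1 K; \<alpha> \<in> arr2 K; src1 K (dom2 K \<alpha>) = tgt1 K x\<rbrakk> \<Longrightarrow> dom2 K (wr K \<alpha> x) = comp1 K (dom2 K \<alpha>) x"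
  and cod2_wr [simp]:
    "\<lbrakk>x \<in> arr1 K; \<alpha> \<in> arr2 K; src1 K (dom2 K \<alpha>) = tgt1 K x\<rbrakk> \<Longrightarrow> cod2 K (wr K \<alpha> x) = comp1 K (cod2 K \<alpha>) x"
  by (simp_all add: wr_def hcomp_in_arr2 dom2_hcomp cod2_hcomp)

lemma wl_vcomp [simp]:
  "\<lbrakk>x \<in> arr1 K; \<alpha> \<in> arr2 K; \<beta> \<in> arr2 K; dom2 K \<alpha> = cod2 K \<beta>; src1 K x = tgt1 K (dom2 K \<alpha>)\<rbrakk>
   \<Longrightarrow> wl K x (\<alpha> \<cdot> \<beta>) = wl K x \<alpha> \<cdot> wl K x \<beta>"
  unfolding wl_def by (subst interchange) simp_all

lemma wr_vcomp [simp]: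
  "\<lbrakk>x \<in> arr1 K; \<alpha> \<in> arr2 K; \<beta> \<in> arr2 K; dom2 K \<alpha> = cod2 K \<beta>; src1 K (dom2 K \<alpha>) = tgt1 K x\<rbrakk>
   \<Longrightarrow> wr K (\<alpha> \<cdot> \<beta>) x = wr K \<alpha> x \<cdot> wr K \<beta> x"
  unfolding wr_def by (subst interchange) simp_all

lemma wl_wl [simp]:
  "\<lbrakk>x \<in> arr1 K; y \<in> arr1 K; \<alpha> \<in> arr2 K; src1 K x = tgt1 K y; src1 K y = tgt1 K (dom2 K \<alpha>)\<rbrakk>
   \<Longrightarrow> wl K x (wl K y \<alpha>) = wl K (comp1 K x y) \<alpha>"
  unfolding wl_def by (simp add: hcomp_assoc [symmetric] hcomp_id2_id2)

lemma wr_wr [simp]: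
  "\<lbrakk>x \<in> arr1 K; y \<in> arr1 K; \<alpha> \<in> arr2 K; src1 K x = tgt1 K y; src1 K (dom2 K \<alpha>) = tgt1 K x\<rbrakk>
   \<Longrightarrow> wr K (wr K \<alpha> x) y = wr K \<alpha> (comp1 K x y)"
  unfolding wr_def by (simp add: hcomp_assoc hcomp_id2_id2)

lemma wl_wr [simp]:
  "\<lbrakk>x \<in> arr1 K; y \<in> arr1 K; \<alpha> \<in> arr2 K; src1 K x = tgt1 K (dom2 K \<alpha>); src1 K (dom2 K \<alpha>) = tgt1 K y\<rbrakk>
   \<Longrightarrow> wl K x (wr K \<alpha> y) = wr K (wl K x \<alpha>) y"
  unfolding wl_def wr_def by (simp add: hcomp_assoc hcomp_in_arr2 dom2_hcomp)

lemma wr_id2 [simp]: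
  "\<lbrakk>x \<in> arr1 K; y \<in> arr1 K; src1 K y = tgt1 K x\<rbrakk> \<Longrightarrow> wr K (id2 K y) x = id2 K (comp1 K y x)"
  unfolding wr_def by (rule hcomp_id2_id2)

lemma wl_id1 [simp]: "\<lbrakk>\<alpha> \<in> arr2 K; tgt1 K (dom2 K \<alpha>) = a\<rbrakk> \<Longrightarrow> wl K (id1 K a) \<alpha> = \<alpha>"
  unfolding wl_def by (simp add: hcomp_id_left)

lemma wr_id1 [simp]: "\<lbrakk>\<alpha> \<in> arr2 K; src1 K (dom2 K \<alpha>) = a\<rbrakk> \<Longrightarrow> wr K \<alpha> (id1 K a) = \<alpha>"
  unfolding wr_def by (simp add: hcomp_id_right)

lemma whisker_exchange:
  assumes "\<alpha> \<in> arr2 K" "\<beta> \<in> arr2 K" "src1 K (dom2 K \<alpha>) = tgt1 K (dom2 K \<beta>)"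
  shows "wr K \<alpha> (cod2 K \<beta>) \<cdot> wl K (dom2 K \<alpha>) \<beta> = wl K (cod2 K \<alpha>) \<beta> \<cdot> wr K \<alpha> (dom2 K \<beta>)"
proof -
  have "wr K \<alpha> (cod2 K \<beta>) \<cdot> wl K (dom2 K \<alpha>) \<beta> = hcomp K \<alpha> \<beta>"
    using assms unfolding wl_def wr_def by (subst interchange) simp_all
  also have "\<dots> = wl K (cod2 K \<alpha>) \<beta> \<cdot> wr K \<alpha> (dom2 K \<beta>)"
    using assms unfolding wl_def wr_def by (subst interchange) simp_all
  finally show ?thesis .
qed

lemma counit_whisker_exchange:
  assumes "\<epsilon> \<in> arr2 K" "cod2 K \<epsilon> = id1 K a" "a \<in> obj K"
  shows "\<epsilon> \<cdot> wl K (dom2 K \<epsilon>) \<epsilon> = \<epsilon> \<cdot> wr K \<epsilon> (dom2 K \<epsilon>)"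
  using whisker_exchange [of \<epsilon> \<epsilon>] assms by simp

lemma vcomp_reduce:
  "\<lbrakk>\<alpha> \<cdot> \<beta> = \<gamma>; \<alpha> \<in> arr2 K; \<beta> \<in> arr2 K; \<delta> \<in> arr2 K; dom2 K \<alpha> = cod2 K \<beta>; dom2 K \<beta> = cod2 K \<delta>\<rbrakk>
   \<Longrightarrow> \<alpha> \<cdot> \<beta> \<cdot> \<delta> = \<gamma> \<cdot> \<delta>"
  by (metis vcomp_assoc)

lemma algebra_idempotent_absorb:
  assumes "monad K k t \<mu> \<eta>"
    and A: "A \<in> arr1 K" "tgt1 K A = k"
    and \<alpha>: "\<alpha> \<in> arr2 K" "dom2 K \<alpha> = comp1 K t A" "cod2 K \<alpha> = A"
    and mult: "\<alpha> \<cdot> wl K t \<alpha> = \<alpha> \<cdot> wr K \<mu> A"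
  shows "\<alpha> \<cdot> wr K \<eta> A \<cdot> \<alpha> = \<alpha>"
    and "\<alpha> \<cdot> wl K t (\<alpha> \<cdot> wr K \<eta> A) = \<alpha>"
proof -
  from assms(1) have [simp]: "k \<in> obj K" "t \<in> arr1 K" "src1 K t = k" "tgt1 K t = k"
    "\<mu> \<in> arr2 K" "dom2 K \<mu> = comp1 K t t" "cod2 K \<mu> = t"
    "\<eta> \<in> arr2 K" "dom2 K \<eta> = id1 K k" "cod2 K \<eta> = t"
    and unit: "\<mu> \<cdot> wr K \<eta> t = id2 K t" "\<mu> \<cdot> wl K t \<eta> = id2 K t"
    unfolding monad_def hom1_def hom2_def by auto
  note [simp] = A \<alpha>
  have "wr K (\<mu> \<cdot> wr K \<eta> t) A = id2 K (comp1 K t A)"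
    by (simp add: unit)
  then have unit_left: "wr K \<mu> A \<cdot> wr K \<eta> (comp1 K t A) = id2 K (comp1 K t A)"
    by simp
  have "wr K (\<mu> \<cdot> wl K t \<eta>) A = id2 K (comp1 K t A)"
    by (simp add: unit)
  then have unit_right: "wr K \<mu> A \<cdot> wr K (wl K t \<eta>) A = id2 K (comp1 K t A)"
    by simp
  have "\<alpha> \<cdot> wr K \<eta> A \<cdot> \<alpha> = \<alpha> \<cdot> wl K t \<alpha> \<cdot> wr K \<eta> (comp1 K t A)"
    using whisker_exchange [of \<eta> \<alpha>] by simp
  also have "\<dots> = \<alpha> \<cdot> wr K \<mu> A \<cdot> wr K \<eta> (comp1 K t A)"
    using vcomp_reduce [OF mult, of "wr K \<eta> (comp1 K t A)"] by simp
  finally show "\<alpha> \<cdot> wr K \<eta> A \<cdot> \<alpha> = \<alpha>"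
    by (simp add: unit_left)
  have "\<alpha> \<cdot> wl K t (\<alpha> \<cdot> wr K \<eta> A) = \<alpha> \<cdot> wr K \<mu> A \<cdot> wr K (wl K t \<eta>) A"
    using vcomp_reduce [OF mult, of "wr K (wl K t \<eta>) A"] by simp
  then show "\<alpha> \<cdot> wl K t (\<alpha> \<cdot> wr K \<eta> A) = \<alpha>"
    by (simp add: unit_right)
qed

end

locale counit_2cell = strict_2cat K for K :: "('o,'m,'c) twocat" +
  fixes k E :: 'o and f v :: 'm and \<epsilon> :: 'c
  assumes f [simp]: "f \<in> arr1 K" "src1 K f = k" "tgt1 K f = E"
    and v [simp]: "v \<in> arr1 K" "src1 K v = E" "tgt1 K v = k"
    and \<epsilon> [simp]: "\<epsilon> \<in> arr2 K" "dom2 K \<epsilon> = comp1 K f v" "cod2 K \<epsilon> = id1 K E"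
begin

lemma k_E_in_obj [simp]: "k \<in> obj K" "E \<in> obj K"
  using src1_obj [OF f(1)] tgt1_obj [OF f(1)] by simp_all

abbreviation vf :: 'm where "vf \<equiv> comp1 K v f"

abbreviation v\<epsilon>f :: 'c where "v\<epsilon>f \<equiv> wr K (wl K v \<epsilon>) f"

definition transpose :: "'m \<Rightarrow> 'c \<Rightarrow> 'c" where
  "transpose X \<gamma> = wl K (comp1 K X v) \<epsilon> \<cdot> wr K \<gamma> v"

lemma transpose_in_arr2 [simp]:
    "\<lbrakk>X \<in> arr1 K; src1 K X = k; \<gamma> \<in> arr2 K; cod2 K \<gamma> = comp1 K X vf\<rbrakk>
     \<Longrightarrow> transpose X \<gamma> \<in> arr2 K"
  and dom2_transpose [simp]:
    "\<lbrakk>X \<in> arr1 K; src1 K X = k; \<gamma> \<in> arr2 K; cod2 K \<gamma> = comp1 K X vf\<rbrakk>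
     \<Longrightarrow> dom2 K (transpose X \<gamma>) = comp1 K (dom2 K \<gamma>) v"
  and cod2_transpose [simp]:
    "\<lbrakk>X \<in> arr1 K; src1 K X = k; \<gamma> \<in> arr2 K; cod2 K \<gamma> = comp1 K X vf\<rbrakk>
     \<Longrightarrow> cod2 K (transpose X \<gamma>) = comp1 K X v"
  by (simp_all add: transpose_def)

lemma transpose_vcomp:
  "\<lbrakk>X \<in> arr1 K; src1 K X = k; \<gamma> \<in> arr2 K; cod2 K \<gamma> = comp1 K X vf;
    \<beta> \<in> arr2 K; cod2 K \<beta> = dom2 K \<gamma>\<rbrakk>
   \<Longrightarrow> transpose X (\<gamma> \<cdot> \<beta>) = transpose X \<gamma> \<cdot> wr K \<beta> v"
  by (simp add: transpose_def)

lemma wl_transpose [simp]: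
  "\<lbrakk>x \<in> arr1 K; src1 K x = tgt1 K X; X \<in> arr1 K; src1 K X = k;
    \<gamma> \<in> arr2 K; cod2 K \<gamma> = comp1 K X vf\<rbrakk>
   \<Longrightarrow> wl K x (transpose X \<gamma>) = transpose (comp1 K x X) (wl K x \<gamma>)"
  by (simp add: transpose_def)

lemma transpose_comp:
  assumes X: "X \<in> arr1 K" "src1 K X = k"
    and Y: "Y \<in> arr1 K" "src1 K Y = k"
    and \<gamma>: "\<gamma> \<in> arr2 K" "dom2 K \<gamma> = Y" "cod2 K \<gamma> = comp1 K X vf"
    and \<delta>: "\<delta> \<in> arr2 K" "cod2 K \<delta> = comp1 K Y vf"
  shows "transpose X \<gamma> \<cdot> transpose Y \<delta> = transpose X (wl K X v\<epsilon>f \<cdot> wr K \<gamma> vf \<cdot> \<delta>)"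
proof -
  note [simp] = X Y \<gamma> \<delta>
  have exchange: "wr K \<gamma> v \<cdot> wl K (comp1 K Y v) \<epsilon>
      = wl K (comp1 K X (comp1 K v (comp1 K f v))) \<epsilon> \<cdot> wr K \<gamma> (comp1 K v (comp1 K f v))"
    using whisker_exchange [of \<gamma> "wl K v \<epsilon>"] by simp
  have "wl K (comp1 K X v) (\<epsilon> \<cdot> wl K (dom2 K \<epsilon>) \<epsilon>) = wl K (comp1 K X v) (\<epsilon> \<cdot> wr K \<epsilon> (dom2 K \<epsilon>))"
    using counit_whisker_exchange [of \<epsilon> E] by simp
  then have counit: "wl K (comp1 K X v) \<epsilon> \<cdot> wl K (comp1 K X (comp1 K v (comp1 K f v))) \<epsilon>
      = wl K (comp1 K X v) \<epsilon> \<cdot> wr K (wl K (comp1 K X v) \<epsilon>) (comp1 K f v)"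
    by simp
  have "transpose X \<gamma> \<cdot> transpose Y \<delta> = wl K (comp1 K X v) \<epsilon> \<cdot> (wr K \<gamma> v \<cdot> wl K (comp1 K Y v) \<epsilon>) \<cdot> wr K \<delta> v"
    by (simp add: transpose_def)
  also have "\<dots> = (wl K (comp1 K X v) \<epsilon> \<cdot> wl K (comp1 K X (comp1 K v (comp1 K f v))) \<epsilon>)
      \<cdot> wr K \<gamma> (comp1 K v (comp1 K f v)) \<cdot> wr K \<delta> v"
    by (simp add: exchange)
  also have "\<dots> = transpose X (wl K X v\<epsilon>f \<cdot> wr K \<gamma> vf \<cdot> \<delta>)"
    by (simp add: counit transpose_def)
  finally show ?thesis .
qed

end

locale em_setting = counit_2cell K k E f v \<epsilon> for K :: "('o,'m,'c) twocat" and k E f v \<epsilon> +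
  fixes k' :: 'o and t' :: 'm and \<mu>' \<eta>' :: 'c
  assumes monad': "monad K k' t' \<mu>' \<eta>'"
begin

lemma monad'_typing [simp]:
  "k' \<in> obj K" "t' \<in> arr1 K" "src1 K t' = k'" "tgt1 K t' = k'"
  "\<mu>' \<in> arr2 K" "dom2 K \<mu>' = comp1 K t' t'" "cod2 K \<mu>' = t'"
  "\<eta>' \<in> arr2 K" "dom2 K \<eta>' = id1 K k'" "cod2 K \<eta>' = t'"
  using monad' unfolding monad_def hom1_def hom2_def by auto

lemma emw_1cellD:
  assumes "emw_1cell K k vf v\<epsilon>f k' t' \<mu>' X \<chi>"
  shows "X \<in> arr1 K" "src1 K X = k" "tgt1 K X = k'"
    and "\<chi> \<in> arr2 K" "dom2 K \<chi> = comp1 K t' X" "cod2 K \<chi> = comp1 K X vf"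
    and "wl K X v\<epsilon>f \<cdot> wr K \<chi> vf \<cdot> wl K t' \<chi> = \<chi> \<cdot> wr K \<mu>' X"
  using assms unfolding emw_1cell_def hom1_def hom2_def by auto

lemma transpose_mult:
  assumes "emw_1cell K k vf v\<epsilon>f k' t' \<mu>' X \<chi>"
  shows "transpose X \<chi> \<cdot> wl K t' (transpose X \<chi>) = transpose X \<chi> \<cdot> wr K \<mu>' (comp1 K X v)"
proof -
  note [simp] = emw_1cellD(1-6) [OF assms]
  have "transpose X \<chi> \<cdot> wl K t' (transpose X \<chi>) = transpose X \<chi> \<cdot> transpose (comp1 K t' X) (wl K t' \<chi>)"
    by simp
  also have "\<dots> = transpose X (wl K X v\<epsilon>f \<cdot> wr K \<chi> vf \<cdot> wl K t' \<chi>)"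
    by (rule transpose_comp) simp_all
  also have "\<dots> = transpose X (\<chi> \<cdot> wr K \<mu>' X)"
    by (simp only: emw_1cellD(7) [OF assms])
  also have "\<dots> = transpose X \<chi> \<cdot> wr K \<mu>' (comp1 K X v)"
    by (simp add: transpose_vcomp)
  finally show ?thesis .
qed

lemma tilde_idem_transpose:
  "\<lbrakk>X \<in> arr1 K; src1 K X = k; tgt1 K X = k'; \<chi> \<in> arr2 K; dom2 K \<chi> = comp1 K t' X; cod2 K \<chi> = comp1 K X vf\<rbrakk>
   \<Longrightarrow> tilde_idem K \<eta>' v \<epsilon> X \<chi> = transpose X \<chi> \<cdot> wr K \<eta>' (comp1 K X v)"
  by (simp add: tilde_idem_def transpose_def)

lemma em_2cell_of_emw_2cell:
  assumes V: "emw_1cell K k vf v\<epsilon>f k' t' \<mu>' V \<psi>"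
    and W: "emw_1cell K k vf v\<epsilon>f k' t' \<mu>' W \<phi>"
    and \<rho>: "emw_2cell K vf v\<epsilon>f t' \<eta>' V \<psi> W \<phi> \<rho>"
    and split_V: "hom2 K \<pi>V (comp1 K V v) VT" "hom2 K \<iota>V VT (comp1 K V v)"
      "\<iota>V \<cdot> \<pi>V = tilde_idem K \<eta>' v \<epsilon> V \<psi>"
    and split_W: "hom2 K \<pi>W (comp1 K W v) WT" "hom2 K \<iota>W WT (comp1 K W v)"
      "\<iota>W \<cdot> \<pi>W = tilde_idem K \<eta>' v \<epsilon> W \<phi>"
  shows "em_2cell K t' VT (\<pi>V \<cdot> wl K (comp1 K V v) \<epsilon> \<cdot> wr K \<psi> v \<cdot> wl K t' \<iota>V)
           WT (\<pi>W \<cdot> wl K (comp1 K W v) \<epsilon> \<cdot> wr K \<phi> v \<cdot> wl K t' \<iota>W)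
           (\<pi>W \<cdot> wl K (comp1 K W v) \<epsilon> \<cdot> wr K \<rho> v \<cdot> \<iota>V)"
proof -
  note [simp] = emw_1cellD(1-6) [OF V] emw_1cellD(1-6) [OF W]
  from \<rho> have [simp]: "\<rho> \<in> arr2 K" "dom2 K \<rho> = V" "cod2 K \<rho> = comp1 K W vf"
    and \<rho>_comm: "wl K W v\<epsilon>f \<cdot> wr K \<rho> vf \<cdot> \<psi> = wl K W v\<epsilon>f \<cdot> wr K \<phi> vf \<cdot> wl K t' \<rho>"
    unfolding emw_2cell_def hom2_def by auto
  from split_V split_W have [simp]:
    "\<pi>V \<in> arr2 K" "dom2 K \<pi>V = comp1 K V v" "cod2 K \<pi>V = VT"
    "\<iota>V \<in> arr2 K" "dom2 K \<iota>V = VT" "cod2 K \<iota>V = comp1 K V v"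
    "\<pi>W \<in> arr2 K" "dom2 K \<pi>W = comp1 K W v" "cod2 K \<pi>W = WT"
    "\<iota>W \<in> arr2 K" "dom2 K \<iota>W = WT" "cod2 K \<iota>W = comp1 K W v"
    unfolding hom2_def by auto
  have [simp]: "VT \<in> arr1 K" "src1 K VT = E" "tgt1 K VT = k'"
    "WT \<in> arr1 K" "src1 K WT = E" "tgt1 K WT = k'"
    using src1_dom2 [of \<pi>V] tgt1_dom2 [of \<pi>V] src1_dom2 [of \<pi>W] tgt1_dom2 [of \<pi>W]
      cod2_in_arr1 [of \<pi>V] cod2_in_arr1 [of \<pi>W] by simp_all
  have split_V_transpose: "\<iota>V \<cdot> \<pi>V = transpose V \<psi> \<cdot> wr K \<eta>' (comp1 K V v)"
    using split_V(3) by (simp add: tilde_idem_transpose)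
  have split_W_transpose: "\<iota>W \<cdot> \<pi>W = transpose W \<phi> \<cdot> wr K \<eta>' (comp1 K W v)"
    using split_W(3) by (simp add: tilde_idem_transpose)
  have absorb_V: "\<iota>V \<cdot> \<pi>V \<cdot> transpose V \<psi> = transpose V \<psi>"
    using vcomp_reduce [OF split_V_transpose, of "transpose V \<psi>"]
      algebra_idempotent_absorb(1) [OF monad' _ _ _ _ _ transpose_mult [OF V]]
    by simp
  have absorb_W: "transpose W \<phi> \<cdot> wl K t' \<iota>W \<cdot> wl K t' \<pi>W = transpose W \<phi>"
    using algebra_idempotent_absorb(2) [OF monad' _ _ _ _ _ transpose_mult [OF W]]
    by (simp flip: split_W_transpose)
  have "(\<pi>W \<cdot> transpose W \<rho> \<cdot> \<iota>V) \<cdot> \<pi>V \<cdot> transpose V \<psi> \<cdot> wl K t' \<iota>V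
      = \<pi>W \<cdot> transpose W \<rho> \<cdot> transpose V \<psi> \<cdot> wl K t' \<iota>V"
    using vcomp_reduce [OF absorb_V, of "wl K t' \<iota>V"] by simp
  also have "\<dots> = \<pi>W \<cdot> transpose W (wl K W v\<epsilon>f \<cdot> wr K \<rho> vf \<cdot> \<psi>) \<cdot> wl K t' \<iota>V"
    using vcomp_reduce [OF transpose_comp [of W V \<rho> \<psi>], of "wl K t' \<iota>V"] by simp
  also have "\<dots> = \<pi>W \<cdot> transpose W (wl K W v\<epsilon>f \<cdot> wr K \<phi> vf \<cdot> wl K t' \<rho>) \<cdot> wl K t' \<iota>V"
    by (simp only: \<rho>_comm)
  also have "\<dots> = \<pi>W \<cdot> transpose W \<phi> \<cdot> transpose (comp1 K t' W) (wl K t' \<rho>) \<cdot> wl K t' \<iota>V"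
    using vcomp_reduce [OF transpose_comp [of W "comp1 K t' W" \<phi> "wl K t' \<rho>"], of "wl K t' \<iota>V"]
    by simp
  also have "\<dots> = (\<pi>W \<cdot> transpose W \<phi> \<cdot> wl K t' \<iota>W) \<cdot> wl K t' (\<pi>W \<cdot> transpose W \<rho> \<cdot> \<iota>V)"
    using vcomp_reduce [OF absorb_W, of "wl K t' (transpose W \<rho>) \<cdot> wl K t' \<iota>V"] by simp
  finally show ?thesis
    unfolding em_2cell_def hom2_def by (simp add: transpose_def)
qed

end

theorem lemma3p4:
  fixes K :: "('o, 'm, 'c) twocat"
    and k k' E :: 'o
    and t t' f v V W VT WT :: 'm
    and \<mu> \<eta> \<mu>' \<eta>' \<epsilon> \<psi> \<phi> \<rho> \<pi>V \<iota>V \<pi>W \<iota>W :: 'c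
  assumes "two_category K"
    and "admits_EM K"
    and "idempotents_split K"
    and "monad K k t \<mu> \<eta>"
    and "monad K k' t' \<mu>' \<eta>'"
    and "em_object K k t \<mu> \<eta> E f v \<epsilon>"
    and "emw_1cell K k t \<mu> k' t' \<mu>' V \<psi>"
    and "emw_1cell K k t \<mu> k' t' \<mu>' W \<phi>"
    and "emw_2cell K t \<mu> t' \<eta>' V \<psi> W \<phi> \<rho>"
    and "hom2 K \<pi>V (comp1 K V v) VT" and "hom2 K \<iota>V VT (comp1 K V v)"
    and "vcomp K \<iota>V \<pi>V = tilde_idem K \<eta>' v \<epsilon> V \<psi>" and "vcomp K \<pi>V \<iota>V = id2 K VT"
    and "hom2 K \<pi>W (comp1 K W v) WT" and "hom2 K \<iota>W WT (comp1 K W v)"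
    and "vcomp K \<iota>W \<pi>W = tilde_idem K \<eta>' v \<epsilon> W \<phi>" and "vcomp K \<pi>W \<iota>W = id2 K WT"
  shows "em_2cell K t' VT
           (vcomp K \<pi>V (vcomp K (wl K (comp1 K V v) \<epsilon>) (vcomp K (wr K \<psi> v) (wl K t' \<iota>V))))
           WT
           (vcomp K \<pi>W (vcomp K (wl K (comp1 K W v) \<epsilon>) (vcomp K (wr K \<phi> v) (wl K t' \<iota>W))))
           (vcomp K \<pi>W (vcomp K (wl K (comp1 K W v) \<epsilon>) (vcomp K (wr K \<rho> v) \<iota>V)))"
proof -
  interpret strict_2cat K
    using assms(1) by (rule two_category_imp_strict_2cat)
  from assms(6) have counit: "counit_2cell K k E f v \<epsilon>"
    and t: "t = comp1 K v f" and \<mu>: "\<mu> = wr K (wl K v \<epsilon>) f"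
    unfolding em_object_def counit_2cell_def counit_2cell_axioms_def hom1_def hom2_def
    by (auto intro: strict_2cat_axioms)
  interpret em_setting K k E f v \<epsilon> k' t' \<mu>' \<eta>'
    using counit assms(5) by (intro em_setting.intro em_setting_axioms.intro)
  show ?thesis
    using assms(7-12,14-16) unfolding t \<mu> by (rule em_2cell_of_emw_2cell)
qed

end
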